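(* For every integer $m\ge2$ and every graph $G$, $\hom(S_{2,1^0};G)\cdot\hom(S_{2,1^{m-2}};G)^2\ge \hom(S_{2,1^{m-1}};G)^2$.
   Context: All graphs are finite; $\hom(H;G)$ is the number of graph homomorphisms from $H$ to $G$. For $k\ge0$, $S_{2,1^k}$ is the tree with vertex set $\{1,\ldots,k+3\}$ and edge set $\{\{1,j\}:2\le j\le k+2\}\cup\{\{k+2,k+3\}\}$. *)

theory Defs
  imports Main "HOL-Library.FuncSet"
begin

definition is_graph :: "'a set \<Rightarrow> ('a \<Rightarrow> 'a \<Rightarrow> bool) \<Rightarrow> bool" where
  "is_graph V E \<longleftrightarrow> finite V \<and> (\<forall>x y. E x y \<longrightarrow> x \<in> V \<and> y \<in> V)
     \<and> (\<forall>x y. E x y \<longrightarrow> E y x) \<and> (\<forall>x. \<not> E x x)"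

definition hom_count :: "'b set \<Rightarrow> 'b set set \<Rightarrow> 'a set \<Rightarrow> ('a \<Rightarrow> 'a \<Rightarrow> bool) \<Rightarrow> nat" where
  "hom_count VH EH V E =
     card {f \<in> VH \<rightarrow>\<^sub>E V. \<forall>x\<in>VH. \<forall>y\<in>VH. {x, y} \<in> EH \<longrightarrow> E (f x) (f y)}"

definition S_verts :: "nat \<Rightarrow> nat set" where
  "S_verts k = {1..k+3}"

definition S_edges :: "nat \<Rightarrow> nat set set" where
  "S_edges k = {{1, j} | j. 2 \<le> j \<and> j \<le> k + 2} \<union> {{k + 2, k + 3}}"

definition hom_S :: "nat \<Rightarrow> 'a set \<Rightarrow> ('a \<Rightarrow> 'a \<Rightarrow> bool) \<Rightarrow> nat" where
  "hom_S k V E = hom_count (S_verts k) (S_edges k) V E"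

end

theory Submission
  imports Defs
begin

(* Let \<Delta> be the maximum degree of G. Removing a leaf at the centre of S_{2,1^{k+1}} leaves
   a copy of S_{2,1^k}, and a homomorphism of the latter extends in at most \<Delta> ways, so
   hom(S_{2,1^{k+1}}; G) \<le> \<Delta> hom(S_{2,1^k}; G). On the other hand S_{2,1^0} is the path with
   two edges, and mapping its middle vertex to a vertex of degree \<Delta> already gives
   hom(S_{2,1^0}; G) \<ge> \<Delta>\<^sup>2. Squaring the first bound and inserting the second proves the claim. *)

definition hom_set :: "'b set \<Rightarrow> 'b set set \<Rightarrow> 'a set \<Rightarrow> ('a \<Rightarrow> 'a \<Rightarrow> bool) \<Rightarrow> ('b \<Rightarrow> 'a) set" where
  "hom_set VH EH V E = {f \<in> VH \<rightarrow>\<^sub>E V. \<forall>x\<in>VH. \<forall>y\<in>VH. {x, y} \<in> EH \<longrightarrow> E (f x) (f y)}"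

lemma hom_count_eq_card_hom_set: "hom_count VH EH V E = card (hom_set VH EH V E)"
  by (simp add: hom_count_def hom_set_def)

lemma hom_setI:
  "f \<in> VH \<rightarrow>\<^sub>E V \<Longrightarrow> (\<And>x y. x \<in> VH \<Longrightarrow> y \<in> VH \<Longrightarrow> {x, y} \<in> EH \<Longrightarrow> E (f x) (f y))
    \<Longrightarrow> f \<in> hom_set VH EH V E"
  by (simp add: hom_set_def)

lemma hom_set_PiE: "f \<in> hom_set VH EH V E \<Longrightarrow> f \<in> VH \<rightarrow>\<^sub>E V"
  by (simp add: hom_set_def)

lemma hom_setD:
  "f \<in> hom_set VH EH V E \<Longrightarrow> x \<in> VH \<Longrightarrow> y \<in> VH \<Longrightarrow> {x, y} \<in> EH \<Longrightarrow> E (f x) (f y)"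
  by (simp add: hom_set_def)

lemma finite_hom_set: "finite VH \<Longrightarrow> finite V \<Longrightarrow> finite (hom_set VH EH V E)"
  by (rule rev_finite_subset[OF finite_PiE]) (auto simp: hom_set_def)

lemma hom_count_relabel:
  assumes "inj \<phi>"
  shows "hom_count (\<phi> ` VH) ((`) \<phi> ` EH) V E = hom_count VH EH V E"
proof -
  have "inj ((`) \<phi>)" using assms by (simp add: inj_def inj_image_eq_iff)
  then have edge_iff: "{\<phi> x, \<phi> y} \<in> (`) \<phi> ` EH \<longleftrightarrow> {x, y} \<in> EH" for x y
    using inj_image_mem_iff[of "(`) \<phi>" "{x, y}"] by simp
  have inv_\<phi>: "inv \<phi> (\<phi> x) = x" for x
    using assms by (rule inv_f_f)
  let ?R = "\<lambda>g. restrict (g \<circ> \<phi>) VH" and ?S = "\<lambda>f. restrict (f \<circ> inv \<phi>) (\<phi> ` VH)"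
  have "bij_betw ?R (hom_set (\<phi> ` VH) ((`) \<phi> ` EH) V E) (hom_set VH EH V E)"
  proof (rule bij_betw_byWitness[where f' = ?S])
    show "\<forall>g\<in>hom_set (\<phi> ` VH) ((`) \<phi> ` EH) V E. ?S (?R g) = g"
    proof
      fix g assume "g \<in> hom_set (\<phi> ` VH) ((`) \<phi> ` EH) V E"
      then have "g \<in> extensional (\<phi> ` VH)" by (auto dest: hom_set_PiE simp: PiE_def)
      then show "?S (?R g) = g" by (intro ext) (auto simp: extensional_def inv_\<phi>)
    qed
    show "\<forall>f\<in>hom_set VH EH V E. ?R (?S f) = f"
    proof
      fix f assume "f \<in> hom_set VH EH V E"
      then have "f \<in> extensional VH" by (auto dest: hom_set_PiE simp: PiE_def)
      then show "?R (?S f) = f" by (intro ext) (auto simp: extensional_def inv_\<phi>)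
    qed
    show "?R ` hom_set (\<phi> ` VH) ((`) \<phi> ` EH) V E \<subseteq> hom_set VH EH V E"
      by (auto intro!: hom_setI dest: hom_set_PiE hom_setD simp: PiE_iff edge_iff)
    show "?S ` hom_set VH EH V E \<subseteq> hom_set (\<phi> ` VH) ((`) \<phi> ` EH) V E"
    proof (rule image_subsetI, rule hom_setI)
      fix f assume f: "f \<in> hom_set VH EH V E"
      then show "?S f \<in> \<phi> ` VH \<rightarrow>\<^sub>E V" by (auto dest: hom_set_PiE simp: PiE_iff inv_\<phi>)
      fix x' y' assume "x' \<in> \<phi> ` VH" "y' \<in> \<phi> ` VH" "{x', y'} \<in> (`) \<phi> ` EH"
      then obtain x y where "x \<in> VH" "y \<in> VH" "x' = \<phi> x" "y' = \<phi> y" "{x, y} \<in> EH"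
        using edge_iff by blast
      with f show "E (?S f x') (?S f y')" by (simp add: inv_\<phi> hom_setD)
    qed
  qed
  then show ?thesis
    unfolding hom_count_eq_card_hom_set by (rule bij_betw_same_card)
qed

definition degree :: "'a set \<Rightarrow> ('a \<Rightarrow> 'a \<Rightarrow> bool) \<Rightarrow> 'a \<Rightarrow> nat" where
  "degree V E v = card {u \<in> V. E v u}"

lemma hom_count_add_pendant_le:
  assumes "finite VH" "finite V" "u \<in> VH" and degree_le: "\<And>v. v \<in> V \<Longrightarrow> degree V E v \<le> D"
  shows "hom_count (insert w VH) (insert {u, w} EH) V E \<le> D * hom_count VH EH V E"
proof -
  let ?H = "hom_set VH EH V E" and ?H' = "hom_set (insert w VH) (insert {u, w} EH) V E"
  let ?N = "\<lambda>g. {x \<in> V. E (g u) x}"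
  let ?split = "\<lambda>f. (restrict f VH, f w)"
  have "inj_on ?split ?H'"
  proof (rule inj_onI)
    fix f g assume "f \<in> ?H'" "g \<in> ?H'" and eq: "?split f = ?split g"
    then have "f \<in> extensional (insert w VH)" "g \<in> extensional (insert w VH)"
      by (auto dest: hom_set_PiE simp: PiE_def)
    with eq show "f = g"
      by (intro ext) (metis (mono_tags) extensional_arb insertE prod.inject restrict_apply')
  qed
  moreover have "?split ` ?H' \<subseteq> Sigma ?H ?N"
  proof (rule image_subsetI)
    fix f assume f: "f \<in> ?H'"
    then have "restrict f VH \<in> ?H"
      by (intro hom_setI) (auto dest: hom_set_PiE hom_setD simp: PiE_iff)
    moreover have "f w \<in> ?N (restrict f VH)"
      using f \<open>u \<in> VH\<close> by (auto dest: hom_set_PiE hom_setD)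
    ultimately show "?split f \<in> Sigma ?H ?N" by simp
  qed
  moreover have "finite (Sigma ?H ?N)"
    using assms by (simp add: finite_hom_set)
  ultimately have "card ?H' \<le> card (Sigma ?H ?N)"
    by (rule card_inj_on_le)
  also have "\<dots> = (\<Sum>g\<in>?H. degree V E (g u))"
    using assms by (simp add: card_SigmaI finite_hom_set degree_def)
  also have "\<dots> \<le> (\<Sum>g\<in>?H. D)"
    using \<open>u \<in> VH\<close> by (intro sum_mono degree_le) (auto dest: hom_set_PiE)
  finally show ?thesis
    by (simp add: hom_count_eq_card_hom_set mult.commute)
qed

(* Relabelling S_{2,1^k} along skip_two frees the label 2, which then becomes the extra
   leaf of S_{2,1^{k+1}}. *)
definition skip_two :: "nat \<Rightarrow> nat" where
  "skip_two j = (if j \<le> 1 then j else Suc j)"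

lemma inj_skip_two: "inj skip_two"
  by (rule injI) (simp add: skip_two_def split: if_splits)

lemma S_verts_Suc: "S_verts (Suc k) = insert 2 (skip_two ` S_verts k)"
proof -
  have "skip_two ` {1..k+3} = insert 1 {3..k+4}"
  proof
    show "skip_two ` {1..k+3} \<subseteq> insert 1 {3..k+4}"
      by (auto simp: skip_two_def)
    show "insert 1 {3..k+4} \<subseteq> skip_two ` {1..k+3}"
    proof
      fix x assume "x \<in> insert 1 {3..k+4}"
      then show "x \<in> skip_two ` {1..k+3}"
        by (cases "x = 1") (auto simp: skip_two_def image_iff intro!: bexI[of _ "x - 1"])
    qed
  qed
  then show ?thesis by (auto simp: S_verts_def)
qed

lemma S_edges_eq: "S_edges k = insert {k + 2, k + 3} ((\<lambda>j. {1, j}) ` {2..k+2})"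
  unfolding S_edges_def by auto

lemma S_edges_Suc: "S_edges (Suc k) = insert {1, 2} ((`) skip_two ` S_edges k)"
proof -
  have pendant_edge: "skip_two ` {k + 2, k + 3} = {k + 3, k + 4}"
    by (simp add: skip_two_def eval_nat_numeral)
  have "(`) skip_two ` (\<lambda>j. {1, j}) ` {2..k+2} = (\<lambda>j. {1, j}) ` Suc ` {2..k+2}"
    unfolding image_image by (rule image_cong) (auto simp: skip_two_def)
  also have "Suc ` {2..k+2} = {3..k+3}"
    by (simp add: image_Suc_atLeastAtMost eval_nat_numeral)
  finally have star_edges: "(`) skip_two ` (\<lambda>j. {1, j}) ` {2..k+2} = (\<lambda>j. {1, j}) ` {3..k+3}" .
  have "(`) skip_two ` S_edges k = insert {k + 3, k + 4} ((\<lambda>j. {1, j}) ` {3..k+3})"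
    unfolding S_edges_eq image_insert[of "(`) skip_two"] pendant_edge star_edges ..
  moreover have "S_edges (Suc k) = insert {k + 3, k + 4} (insert {1, 2} ((\<lambda>j. {1, j}) ` {3..k+3}))"
    unfolding S_edges_eq by (auto simp: eval_nat_numeral)
  ultimately show ?thesis
    by (simp only: insert_commute)
qed

lemma hom_S_Suc_le:
  assumes "finite V" "\<And>v. v \<in> V \<Longrightarrow> degree V E v \<le> D"
  shows "hom_S (Suc k) V E \<le> D * hom_S k V E"
proof -
  have "hom_S (Suc k) V E
      = hom_count (insert 2 (skip_two ` S_verts k)) (insert {1, 2} ((`) skip_two ` S_edges k)) V E"
    by (simp add: hom_S_def S_verts_Suc S_edges_Suc)
  also have "\<dots> \<le> D * hom_count (skip_two ` S_verts k) ((`) skip_two ` S_edges k) V E"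
    using assms by (intro hom_count_add_pendant_le) (auto simp: S_verts_def skip_two_def image_iff)
  also have "\<dots> = D * hom_S k V E"
    by (simp add: hom_S_def hom_count_relabel inj_skip_two)
  finally show ?thesis .
qed

lemma degree_sq_le_hom_S_0:
  assumes "is_graph V E" "v \<in> V"
  shows "(degree V E v)\<^sup>2 \<le> hom_S 0 V E"
proof -
  let ?N = "{u \<in> V. E v u}"
  let ?path = "\<lambda>(a, b). restrict (\<lambda>j. if j = 1 then a else if j = 2 then v else b) {1..3::nat}"
  have sym: "E x y \<Longrightarrow> E y x" for x y
    using assms(1) by (simp add: is_graph_def)
  have "inj_on ?path (?N \<times> ?N)"
  proof (rule inj_onI)
    fix p q assume "?path p = ?path q"
    then have "?path p 1 = ?path q 1" "?path p 3 = ?path q 3" by simp_all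
    then show "p = q" by (cases p, cases q) simp
  qed
  moreover have "?path ` (?N \<times> ?N) \<subseteq> hom_set (S_verts 0) (S_edges 0) V E"
  proof (rule image_subsetI)
    fix p assume p: "p \<in> ?N \<times> ?N"
    have "S_edges 0 = {{1, 2}, {2, 3}}" unfolding S_edges_def by auto
    with p assms(2) show "?path p \<in> hom_set (S_verts 0) (S_edges 0) V E"
      by (intro hom_setI) (auto simp: S_verts_def doubleton_eq_iff intro: sym)
  qed
  moreover have "finite (hom_set (S_verts 0) (S_edges 0) V E)"
    using assms(1) by (simp add: finite_hom_set S_verts_def is_graph_def)
  ultimately have "card (?N \<times> ?N) \<le> hom_S 0 V E"
    unfolding hom_S_def hom_count_eq_card_hom_set by (rule card_inj_on_le)
  then show ?thesis
    by (simp add: degree_def power2_eq_square card_cartesian_product)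
qed

definition max_degree :: "'a set \<Rightarrow> ('a \<Rightarrow> 'a \<Rightarrow> bool) \<Rightarrow> nat" where
  "max_degree V E = Max (insert 0 (degree V E ` V))"

lemma degree_le_max_degree: "finite V \<Longrightarrow> v \<in> V \<Longrightarrow> degree V E v \<le> max_degree V E"
  unfolding max_degree_def by (simp add: Max_ge_iff)

lemma max_degree_sq_le_hom_S_0:
  assumes "is_graph V E"
  shows "(max_degree V E)\<^sup>2 \<le> hom_S 0 V E"
proof -
  have "max_degree V E \<in> insert 0 (degree V E ` V)"
    using assms unfolding max_degree_def is_graph_def by (intro Max_in) auto
  with assms show ?thesis
    by (auto intro: degree_sq_le_hom_S_0)
qed

theorem theorem3p3:
  fixes V :: "'a set" and E :: "'a \<Rightarrow> 'a \<Rightarrow> bool" and m :: nat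
  assumes "is_graph V E" and "m \<ge> 2"
  shows "hom_S 0 V E * (hom_S (m - 2) V E)^2 \<ge> (hom_S (m - 1) V E)^2"
proof -
  have fin: "finite V"
    using assms(1) by (simp add: is_graph_def)
  obtain k where k: "m - 2 = k" "m - 1 = Suc k"
    using assms(2) by (intro that[of "m - 2"]) auto
  have "hom_S (Suc k) V E \<le> max_degree V E * hom_S k V E"
    using fin by (rule hom_S_Suc_le) (rule degree_le_max_degree[OF fin])
  then have "(hom_S (Suc k) V E)\<^sup>2 \<le> (max_degree V E)\<^sup>2 * (hom_S k V E)\<^sup>2"
    by (metis power_mono power_mult_distrib zero_le)
  also have "\<dots> \<le> hom_S 0 V E * (hom_S k V E)\<^sup>2"
    using max_degree_sq_le_hom_S_0[OF assms(1)] by (rule mult_right_mono) simp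
  finally show ?thesis
    unfolding k .
qed

end
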